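(* For every positive integer $N$ there exists a full spark equal norm tight integer frame with $2N$ elements in $\mathcal{H}_2$.
   Context: $\mathcal{H}_M$ is the real $M$-dimensional Hilbert space, identified with $\mathbb{R}^M$ via a fixed orthonormal basis. An equal norm tight integer frame (ENTIF) with $N$ elements in $\mathcal{H}_M$ is an $M\times N$ integer matrix $A$ of rank $M$ with $AA^T=\lambda I_M$ for some $\lambda>0$ and all columns of the same Euclidean norm (its columns are the frame vectors). A frame of $N\ge M$ vectors in $\mathcal{H}_M$ is full spark if every subset of $M$ of its vectors is linearly independent. *)

theory Defs
  imports Main "HOL-Analysis.Analysis"
begin

text \<open>An M x N integer matrix is represented as A :: nat => nat => int,
  where A i j is the entry in row i < M, column j < N. The columns are the frame vectors.\<close>

definition rank_full_rows :: "nat \<Rightarrow> nat \<Rightarrow> (nat \<Rightarrow> nat \<Rightarrow> int) \<Rightarrow> bool" where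
  "rank_full_rows M N A \<longleftrightarrow>
     (\<forall>c :: nat \<Rightarrow> real. (\<forall>j<N. (\<Sum>i<M. c i * real_of_int (A i j)) = 0) \<longrightarrow> (\<forall>i<M. c i = 0))"

definition is_ENTIF :: "nat \<Rightarrow> nat \<Rightarrow> (nat \<Rightarrow> nat \<Rightarrow> int) \<Rightarrow> bool" where
  "is_ENTIF M N A \<longleftrightarrow>
     rank_full_rows M N A \<and>
     (\<exists>lam::real. lam > 0 \<and>
        (\<forall>i<M. \<forall>k<M. real_of_int (\<Sum>j<N. A i j * A k j) = (if i = k then lam else 0))) \<and>
     (\<exists>c::int. \<forall>j<N. (\<Sum>i<M. (A i j)^2) = c)"

definition full_spark :: "nat \<Rightarrow> nat \<Rightarrow> (nat \<Rightarrow> nat \<Rightarrow> int) \<Rightarrow> bool" where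
  "full_spark M N A \<longleftrightarrow> M \<le> N \<and>
     (\<forall>S. S \<subseteq> {..<N} \<and> card S = M \<longrightarrow>
        (\<forall>c :: nat \<Rightarrow> real. (\<forall>i<M. (\<Sum>j\<in>S. c j * real_of_int (A i j)) = 0) \<longrightarrow> (\<forall>j\<in>S. c j = 0)))"

end

theory Submission imports Defs begin

text \<open>Write \<open>z = 3 + 4i\<close>. The columns \<open>5\<^sup>N\<^sup>-\<^sup>j z\<^sup>j\<close> \<open>(j < N)\<close> all have norm
  \<open>5\<^sup>N\<close>, and adjoining their rotations \<open>i\<cdot>5\<^sup>N\<^sup>-\<^sup>j z\<^sup>j\<close> by a right angle makes any
  family of equal-norm planar vectors a tight frame. Two columns are dependent only if
  \<open>conj(z\<^sup>k) z\<^sup>l = 25\<^sup>k z\<^sup>l\<^sup>-\<^sup>k\<close> has a vanishing real or imaginary part; but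
  \<open>z\<^sup>d \<equiv> 3 + 4i (mod 5)\<close> for \<open>d \<ge> 1\<close>, so neither part of \<open>z\<^sup>d\<close> vanishes.\<close>

definition gmult :: "int \<times> int \<Rightarrow> int \<times> int \<Rightarrow> int \<times> int" where
  "gmult u v = (fst u * fst v - snd u * snd v, fst u * snd v + snd u * fst v)"

definition dot2 :: "int \<times> int \<Rightarrow> int \<times> int \<Rightarrow> int" where
  "dot2 u v = fst u * fst v + snd u * snd v"

definition cross2 :: "int \<times> int \<Rightarrow> int \<times> int \<Rightarrow> int" where
  "cross2 u v = fst u * snd v - snd u * fst v"

lemma dot2_commute: "dot2 u v = dot2 v u"
  by (simp add: dot2_def mult.commute)

lemma cross2_commute: "cross2 u v = - cross2 v u"
  by (simp add: cross2_def mult.commute)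

lemma dot2_gmult: "dot2 u (gmult u v) = dot2 u u * fst v"
  by (simp add: dot2_def gmult_def algebra_simps)

lemma cross2_gmult: "cross2 u (gmult u v) = dot2 u u * snd v"
  by (simp add: cross2_def dot2_def gmult_def algebra_simps)

lemma dot2_gmult_self: "dot2 (gmult u v) (gmult u v) = dot2 u u * dot2 v v"
  by (simp add: dot2_def gmult_def algebra_simps)

primrec pyth_pow :: "nat \<Rightarrow> int \<times> int" where
  "pyth_pow 0 = (1, 0)"
| "pyth_pow (Suc n) = gmult (pyth_pow n) (3, 4)"

lemma pyth_pow_add: "pyth_pow (k + d) = gmult (pyth_pow k) (pyth_pow d)"
  by (induction d) (simp_all add: gmult_def algebra_simps)

lemma dot2_pyth_pow: "dot2 (pyth_pow n) (pyth_pow n) = 25 ^ n"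
  by (induction n) (simp_all add: dot2_gmult_self dot2_def[of "(3, 4)"] dot2_def[of "(1, 0)"])

lemma pyth_pow_mod_5:
  assumes "d \<ge> 1"
  shows "fst (pyth_pow d) mod 5 = 3 \<and> snd (pyth_pow d) mod 5 = 4"
  using assms
proof (induction d rule: dec_induct)
  case base
  then show ?case by (simp add: gmult_def)
next
  case (step n)
  then obtain q r where "fst (pyth_pow n) = 5 * q + 3" "snd (pyth_pow n) = 5 * r + 4"
    by (metis mult.commute div_mult_mod_eq)
  then have "fst (pyth_pow (Suc n)) = 5 * (3 * q - 4 * r - 2) + 3"
    and "snd (pyth_pow (Suc n)) = 5 * (4 * q + 3 * r + 4) + 4"
    by (simp_all add: gmult_def)
  then show ?case
    by (simp only: mod_mult_self4) simp
qed

lemma pyth_pow_nonzero: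
  assumes "d \<ge> 1"
  shows "fst (pyth_pow d) \<noteq> 0" and "snd (pyth_pow d) \<noteq> 0"
  using pyth_pow_mod_5[OF assms] by auto

lemma dot2_pyth_pow_nonzero: "dot2 (pyth_pow k) (pyth_pow l) \<noteq> 0"
proof -
  have shifted: "dot2 (pyth_pow k) (pyth_pow (k + d)) \<noteq> 0" for k d
  proof (cases "d = 0")
    case False
    then show ?thesis
      by (simp add: pyth_pow_add dot2_gmult dot2_pyth_pow pyth_pow_nonzero)
  qed (simp add: dot2_pyth_pow)
  consider d where "l = k + d" | d where "k = l + d"
    by (metis le_iff_add nle_le)
  then show ?thesis
    using shifted dot2_commute by cases metis+
qed

lemma cross2_pyth_pow_nonzero:
  assumes "k \<noteq> l"
  shows "cross2 (pyth_pow k) (pyth_pow l) \<noteq> 0"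
proof -
  have shifted: "cross2 (pyth_pow k) (pyth_pow (k + Suc d)) \<noteq> 0" for k d
    using pyth_pow_nonzero(2)[of "Suc d"]
    by (simp add: pyth_pow_add cross2_gmult dot2_pyth_pow del: add_Suc_right pyth_pow.simps(2))
  consider d where "l = k + Suc d" | d where "k = l + Suc d"
    using assms by (metis less_iff_Suc_add linorder_neqE_nat add_Suc_right)
  then show ?thesis
  proof cases
    case 1
    then show ?thesis using shifted by simp
  next
    case 2
    then show ?thesis
      using shifted[of l d] cross2_commute[of "pyth_pow k" "pyth_pow l"] by simp
  qed
qed

lemma cramer2_trivial:
  fixes x y a b c d :: real
  assumes "x * a + y * b = 0" "x * c + y * d = 0" "a * d - b * c \<noteq> 0"
  shows "x = 0" and "y = 0"
proof -
  have "x * (a * d - b * c) = d * (x * a + y * b) - b * (x * c + y * d)"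
    by (simp add: algebra_simps)
  then show "x = 0"
    using assms by simp
  have "y * (a * d - b * c) = a * (x * c + y * d) - c * (x * a + y * b)"
    by (simp add: algebra_simps)
  then show "y = 0"
    using assms by simp
qed

abbreviation minor2 :: "(nat \<Rightarrow> nat \<Rightarrow> int) \<Rightarrow> nat \<Rightarrow> nat \<Rightarrow> int" where
  "minor2 A p q \<equiv> A 0 p * A 1 q - A 1 p * A 0 q"

lemma rank_full_rows_2I:
  assumes "p < n" "q < n" "minor2 A p q \<noteq> 0"
  shows "rank_full_rows 2 n A"
  unfolding rank_full_rows_def
proof (intro allI impI)
  fix c :: "nat \<Rightarrow> real" and i :: nat
  assume h: "\<forall>j<n. (\<Sum>i<2. c i * real_of_int (A i j)) = 0" and "i < 2"
  have col_p: "c 0 * A 0 p + c 1 * A 1 p = 0" and col_q: "c 0 * A 0 q + c 1 * A 1 q = 0"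
    using h assms(1,2) by (simp_all add: numeral_2_eq_2)
  have "real_of_int (A 0 p) * real_of_int (A 1 q) - real_of_int (A 1 p) * real_of_int (A 0 q) \<noteq> 0"
    using assms(3) by (simp flip: of_int_mult of_int_diff)
  then have "c 0 = 0" "c 1 = 0"
    by (fact cramer2_trivial[OF col_p col_q])+
  then show "c i = 0"
    using \<open>i < 2\<close> by (auto simp: less_2_cases_iff)
qed

lemma full_spark_2I:
  assumes "2 \<le> n" and minors: "\<And>p q. p < n \<Longrightarrow> q < n \<Longrightarrow> p \<noteq> q \<Longrightarrow> minor2 A p q \<noteq> 0"
  shows "full_spark 2 n A"
  unfolding full_spark_def
proof (intro conjI allI impI ballI)
  fix S c j
  assume S: "S \<subseteq> {..<n} \<and> card S = 2"
    and h: "\<forall>i<2. (\<Sum>j\<in>S. c j * real_of_int (A i j)) = 0" and "j \<in> S"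
  obtain p q where pq: "S = {p, q}" "p \<noteq> q"
    using S by (meson card_2_iff)
  have row_0: "c p * A 0 p + c q * A 0 q = 0" and row_1: "c p * A 1 p + c q * A 1 q = 0"
    using h pq by (simp_all add: numeral_2_eq_2)
  have "real_of_int (A 0 p) * real_of_int (A 1 q) - real_of_int (A 0 q) * real_of_int (A 1 p) \<noteq> 0"
    using minors[of p q] S pq by (simp add: mult.commute flip: of_int_mult of_int_diff)
  then have "c p = 0" "c q = 0"
    by (fact cramer2_trivial[OF row_0 row_1])+
  then show "c j = 0"
    using \<open>j \<in> S\<close> pq by auto
qed (use assms in simp)

definition rot_double :: "nat \<Rightarrow> (nat \<Rightarrow> int \<times> int) \<Rightarrow> nat \<Rightarrow> nat \<Rightarrow> int" where
  "rot_double n u i j =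
     (if j < n then (if i = 0 then fst (u j) else snd (u j))
      else (if i = 0 then - snd (u (j - n)) else fst (u (j - n))))"

lemma sum_lessThan_mult_2:
  fixes f :: "nat \<Rightarrow> 'a::comm_monoid_add"
  shows "(\<Sum>j<2 * n. f j) = (\<Sum>j<n. f j) + (\<Sum>j<n. f (j + n))"
proof -
  have "(\<Sum>j<2 * n. f j) = (\<Sum>j<n. f j) + (\<Sum>j\<in>{0 + n..<n + n}. f j)"
    using sum.atLeastLessThan_concat[of 0 n "2 * n" f] by (simp add: atLeast0LessThan mult_2)
  also have "(\<Sum>j\<in>{0 + n..<n + n}. f j) = (\<Sum>j<n. f (j + n))"
    by (simp only: sum.shift_bounds_nat_ivl atLeast0LessThan)
  finally show ?thesis .
qed

lemma rot_double_gram: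
  assumes "i < 2" "k < 2"
  shows "(\<Sum>j<2 * n. rot_double n u i j * rot_double n u k j) =
           (if i = k then (\<Sum>j<n. dot2 (u j) (u j)) else 0)"
  using assms unfolding sum_lessThan_mult_2
  by (auto simp: less_2_cases_iff rot_double_def dot2_def sum.distrib[symmetric] algebra_simps)

lemma rot_double_minor:
  "p < n \<Longrightarrow> q < n \<Longrightarrow> minor2 (rot_double n u) p q = cross2 (u p) (u q)"
  "p < n \<Longrightarrow> minor2 (rot_double n u) p (q + n) = dot2 (u p) (u q)"
  "minor2 (rot_double n u) (p + n) (q + n) = cross2 (u p) (u q)"
  by (simp_all add: rot_double_def cross2_def dot2_def algebra_simps)

lemma is_ENTIF_rot_double:
  assumes "n \<ge> 1" and norms: "\<And>j. j < n \<Longrightarrow> dot2 (u j) (u j) = c" and "c > 0"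
  shows "is_ENTIF 2 (2 * n) (rot_double n u)"
  unfolding is_ENTIF_def
proof (intro conjI)
  have "minor2 (rot_double n u) 0 (0 + n) = c"
    using rot_double_minor(2)[where p = 0 and q = 0] norms[of 0] assms by simp
  then show "rank_full_rows 2 (2 * n) (rot_double n u)"
    using assms by (intro rank_full_rows_2I[of 0 _ "0 + n"]) auto
  have "(\<Sum>j<n. dot2 (u j) (u j)) = n * c"
    using norms by simp
  then show "\<exists>lam>0. \<forall>i<2. \<forall>k<2. real_of_int (\<Sum>j<2 * n. rot_double n u i j * rot_double n u k j) =
                                    (if i = k then lam else 0)"
    using assms by (intro exI[of _ "real n * c"]) (simp add: rot_double_gram)
  have "(\<Sum>i<2. (rot_double n u i j)\<^sup>2) = c" if "j < 2 * n" for j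
    using that norms[of j] norms[of "j - n"]
    by (cases "j < n") (simp_all add: numeral_2_eq_2 rot_double_def dot2_def power2_eq_square add.commute)
  then show "\<exists>c. \<forall>j<2 * n. (\<Sum>i<2. (rot_double n u i j)\<^sup>2) = c"
    by blast
qed

lemma full_spark_rot_double:
  assumes "n \<ge> 1"
    and crosses: "\<And>k l. k < n \<Longrightarrow> l < n \<Longrightarrow> k \<noteq> l \<Longrightarrow> cross2 (u k) (u l) \<noteq> 0"
    and dots: "\<And>k l. k < n \<Longrightarrow> l < n \<Longrightarrow> dot2 (u k) (u l) \<noteq> 0"
  shows "full_spark 2 (2 * n) (rot_double n u)"
proof (rule full_spark_2I)
  have minors_lt: "minor2 (rot_double n u) p q \<noteq> 0" if "p < q" "q < 2 * n" for p q
  proof -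
    consider "q < n" | "p < n" "n \<le> q" | "n \<le> p"
      by linarith
    then show ?thesis
    proof cases
      case 1
      then show ?thesis
        using crosses[of p q] that rot_double_minor(1)[where p = p and q = q] by simp
    next
      case 2
      then show ?thesis
        using dots[of p "q - n"] that rot_double_minor(2)[where p = p and q = "q - n" and n = n and u = u]
        by simp
    next
      case 3
      then show ?thesis
        using crosses[of "p - n" "q - n"] that
          rot_double_minor(3)[where p = "p - n" and q = "q - n" and n = n and u = u]
        by simp
    qed
  qed
  fix p q assume "p < 2 * n" "q < 2 * n" "p \<noteq> q"
  then show "minor2 (rot_double n u) p q \<noteq> 0"
    using minors_lt[of p q] minors_lt[of q p] by (cases "p < q") (simp_all add: algebra_simps)
qed (use assms in simp)

theorem theorem4p2:
  fixes N :: nat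
  assumes "N \<ge> 1"
  shows "\<exists>A :: nat \<Rightarrow> nat \<Rightarrow> int. is_ENTIF 2 (2 * N) A \<and> full_spark 2 (2 * N) A"
proof -
  define u where "u j = (5 ^ (N - j) * fst (pyth_pow j), 5 ^ (N - j) * snd (pyth_pow j))" for j
  have scale: "dot2 (u k) (u l) = 5 ^ (N - k) * 5 ^ (N - l) * dot2 (pyth_pow k) (pyth_pow l)"
    "cross2 (u k) (u l) = 5 ^ (N - k) * 5 ^ (N - l) * cross2 (pyth_pow k) (pyth_pow l)" for k l
    by (simp_all add: u_def dot2_def cross2_def algebra_simps)
  have "dot2 (u j) (u j) = 25 ^ N" if "j < N" for j
    using that by (simp add: scale dot2_pyth_pow flip: power_mult_distrib power_add)
  then have "is_ENTIF 2 (2 * N) (rot_double N u)"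
    using assms by (intro is_ENTIF_rot_double) auto
  moreover have "full_spark 2 (2 * N) (rot_double N u)"
    using assms by (intro full_spark_rot_double)
      (simp_all add: scale dot2_pyth_pow_nonzero cross2_pyth_pow_nonzero)
  ultimately show ?thesis
    by blast
qed

end
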